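(* Let $X,Y$ be measurable spaces and $\hat\nu$ a probability kernel. Then (1) the map $\pi\mapsto H^{\hat\nu}(\pi)$ on probabilities on $X\times Y$ is concave; (2) if $\pi_n,\pi$ are probabilities on $X\times Y$ such that $\int f\,d\pi_n\to\int f\,d\pi$ for every bounded measurable $f:X\times Y\to\mathbb{R}$, then $\limsup_n H^{\hat\nu}(\pi_n)\le H^{\hat\nu}(\pi)$.
   Context: A probability kernel is a family $\hat\nu=\{\hat\nu^y: y\in Y\}$ of probabilities on $X$ such that $y\mapsto\hat\nu^y(B)$ is measurable for each measurable $B\subset X$. $\mathcal{F}(\pi)$ is the set of measurable functions whose $\pi$-integral is well defined, and $H^{\hat\nu}(\pi)=-\sup\{\int c\,d\pi:\ c\in\mathcal{F}(\pi),\ \int e^{c(x,y)}\hat\nu^y(dx)=1\ \forall y\}$. *)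

theory Defs
  imports "HOL-Probability.Probability"
begin

definition prob_kernel :: "'b measure \<Rightarrow> 'a measure \<Rightarrow> ('b \<Rightarrow> 'a measure) \<Rightarrow> bool" where
  "prob_kernel Y X \<nu> \<longleftrightarrow>
     (\<forall>y\<in>space Y. prob_space (\<nu> y) \<and> sets (\<nu> y) = sets X) \<and>
     (\<forall>B\<in>sets X. (\<lambda>y. emeasure (\<nu> y) B) \<in> borel_measurable Y)"

definition prob_on :: "('a \<times> 'b) measure \<Rightarrow> 'a measure \<Rightarrow> 'b measure \<Rightarrow> bool" where
  "prob_on \<pi> X Y \<longleftrightarrow> prob_space \<pi> \<and> sets \<pi> = sets (X \<Otimes>\<^sub>M Y)"

definition int_pos :: "'a measure \<Rightarrow> ('a \<Rightarrow> real) \<Rightarrow> ennreal" where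
  "int_pos M c = (\<integral>\<^sup>+ x. ennreal (c x) \<partial>M)"

definition int_neg :: "'a measure \<Rightarrow> ('a \<Rightarrow> real) \<Rightarrow> ennreal" where
  "int_neg M c = (\<integral>\<^sup>+ x. ennreal (- c x) \<partial>M)"

definition integral_well_defined :: "'a measure \<Rightarrow> ('a \<Rightarrow> real) \<Rightarrow> bool" where
  "integral_well_defined M c \<longleftrightarrow>
     c \<in> borel_measurable M \<and> (int_pos M c \<noteq> \<infinity> \<or> int_neg M c \<noteq> \<infinity>)"

definition ext_integral :: "'a measure \<Rightarrow> ('a \<Rightarrow> real) \<Rightarrow> ereal" where
  "ext_integral M c = enn2ereal (int_pos M c) - enn2ereal (int_neg M c)"

definition H_kernel ::
  "'a measure \<Rightarrow> 'b measure \<Rightarrow> ('b \<Rightarrow> 'a measure) \<Rightarrow> ('a \<times> 'b) measure \<Rightarrow> ereal" where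
  "H_kernel X Y \<nu> \<pi> =
     - (SUP c \<in> {c. c \<in> borel_measurable (X \<Otimes>\<^sub>M Y) \<and> integral_well_defined \<pi> c \<and>
                   (\<forall>y\<in>space Y. (\<integral>\<^sup>+ x. ennreal (exp (c (x, y))) \<partial>(\<nu> y)) = 1)}.
          ext_integral \<pi> c)"

definition mix_measure ::
  "'a measure \<Rightarrow> 'b measure \<Rightarrow> real \<Rightarrow> ('a \<times> 'b) measure \<Rightarrow> ('a \<times> 'b) measure \<Rightarrow> ('a \<times> 'b) measure" where
  "mix_measure X Y t \<pi>1 \<pi>2 =
     measure_of (space (X \<Otimes>\<^sub>M Y)) (sets (X \<Otimes>\<^sub>M Y))
       (\<lambda>A. ennreal t * emeasure \<pi>1 A + ennreal (1 - t) * emeasure \<pi>2 A)"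

end

theory Submission
  imports Defs
begin

text \<open>
  \<open>H\<^sup>\<nu>(\<pi>)\<close> is minus the supremum of \<open>\<integral> c d\<pi>\<close> over the constraints \<open>c\<close> with
  \<open>\<integral> e\<^sup>c d\<nu>\<^sup>y = 1\<close>, a condition that involves \<open>\<pi>\<close> only through the well-definedness of the
  integral. An integral against a mixture is the mixture of the integrals, and a constraint
  admissible for a mixture is admissible for both components, so the supremum is convex in \<open>\<pi>\<close>.
  For upper semicontinuity, the supremum does not change when it is restricted to bounded
  constraints: truncating \<open>c\<close> from above and below and renormalising against \<open>\<nu>\<^sup>y\<close> costs
  arbitrarily little. For bounded \<open>c\<close> the integral \<open>\<integral> c d\<pi>\<^sub>n\<close> converges by assumption, and a
  supremum of continuous functionals is lower semicontinuous.
\<close>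

lemma sets_mix_measure [measurable_cong]: "sets (mix_measure X Y t \<pi>1 \<pi>2) = sets (X \<Otimes>\<^sub>M Y)"
  unfolding mix_measure_def by (simp add: sets.sigma_sets_eq)

lemma emeasure_mix_measure:
  assumes s1: "sets \<pi>1 = sets (X \<Otimes>\<^sub>M Y)" and s2: "sets \<pi>2 = sets (X \<Otimes>\<^sub>M Y)"
    and A: "A \<in> sets (X \<Otimes>\<^sub>M Y)"
  shows "emeasure (mix_measure X Y t \<pi>1 \<pi>2) A
    = ennreal t * emeasure \<pi>1 A + ennreal (1 - t) * emeasure \<pi>2 A"
  unfolding mix_measure_def
proof (rule emeasure_measure_of_sigma[OF sets.sigma_algebra_axioms _ _ A])
  show "countably_additive (sets (X \<Otimes>\<^sub>M Y))
    (\<lambda>A. ennreal t * emeasure \<pi>1 A + ennreal (1 - t) * emeasure \<pi>2 A)"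
  proof (rule countably_additiveI)
    fix F :: "nat \<Rightarrow> _" assume F: "range F \<subseteq> sets (X \<Otimes>\<^sub>M Y)" "disjoint_family F"
    then have "(\<Sum>i. emeasure \<pi>1 (F i)) = emeasure \<pi>1 (\<Union>i. F i)"
      and "(\<Sum>i. emeasure \<pi>2 (F i)) = emeasure \<pi>2 (\<Union>i. F i)"
      using s1 s2 by (auto intro!: suminf_emeasure)
    then show "(\<Sum>i. ennreal t * emeasure \<pi>1 (F i) + ennreal (1 - t) * emeasure \<pi>2 (F i)) =
        ennreal t * emeasure \<pi>1 (\<Union> (range F)) + ennreal (1 - t) * emeasure \<pi>2 (\<Union> (range F))"
      by (simp add: suminf_add[symmetric] ennreal_suminf_cmult)
  qed
qed (simp add: positive_def)

lemma nn_integral_mix_measure: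
  assumes s1: "sets \<pi>1 = sets (X \<Otimes>\<^sub>M Y)" and s2: "sets \<pi>2 = sets (X \<Otimes>\<^sub>M Y)"
    and f: "f \<in> borel_measurable (X \<Otimes>\<^sub>M Y)"
  shows "(\<integral>\<^sup>+z. f z \<partial>mix_measure X Y t \<pi>1 \<pi>2) =
    ennreal t * (\<integral>\<^sup>+z. f z \<partial>\<pi>1) + ennreal (1 - t) * (\<integral>\<^sup>+z. f z \<partial>\<pi>2)"
  using f
proof induction
  case (cong f g)
  have "space (mix_measure X Y t \<pi>1 \<pi>2) = space (X \<Otimes>\<^sub>M Y)" "space \<pi>1 = space (X \<Otimes>\<^sub>M Y)"
    "space \<pi>2 = space (X \<Otimes>\<^sub>M Y)"
    using s1 s2 by (metis sets_eq_imp_space_eq sets_mix_measure)+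
  with cong show ?case by (simp cong: nn_integral_cong_simp)
next
  case (set A)
  then show ?case by (simp add: emeasure_mix_measure[OF s1 s2] s1 s2)
next
  case (mult f c)
  then have "f \<in> borel_measurable \<pi>1" "f \<in> borel_measurable \<pi>2"
    using s1 s2 by (auto cong: measurable_cong_sets)
  with mult show ?case by (simp add: nn_integral_cmult distrib_left mult.left_commute)
next
  case (add f g)
  then have "f \<in> borel_measurable \<pi>1" "f \<in> borel_measurable \<pi>2"
    "g \<in> borel_measurable \<pi>1" "g \<in> borel_measurable \<pi>2"
    using s1 s2 by (auto cong: measurable_cong_sets)
  with add show ?case by (simp add: nn_integral_add distrib_left algebra_simps)
next
  case (seq U)
  have SUP_U: "integral\<^sup>N M (\<Squnion> range U) = (SUP i. integral\<^sup>N M (U i))"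
    if "sets M = sets (X \<Otimes>\<^sub>M Y)" for M :: "('a \<times> 'b) measure"
  proof -
    have "\<Squnion> range U = (\<lambda>x. SUP i. U i x)" by (auto simp: image_comp)
    with seq that show ?thesis
      by (simp add: nn_integral_monotone_convergence_SUP cong: measurable_cong_sets)
  qed
  have "incseq (\<lambda>i. ennreal t * integral\<^sup>N \<pi>1 (U i))"
    "incseq (\<lambda>i. ennreal (1 - t) * integral\<^sup>N \<pi>2 (U i))"
    using seq by (auto simp: incseq_def le_fun_def intro!: mult_left_mono nn_integral_mono)
  then have "(SUP i. integral\<^sup>N (mix_measure X Y t \<pi>1 \<pi>2) (U i)) =
      (SUP i. ennreal t * integral\<^sup>N \<pi>1 (U i)) + (SUP i. ennreal (1 - t) * integral\<^sup>N \<pi>2 (U i))"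
    using seq by (simp add: ennreal_SUP_add)
  then show ?case
    using s1 s2 by (simp only: SUP_U sets_mix_measure SUP_mult_left_ennreal)
qed

lemma
  assumes "sets \<pi>1 = sets (X \<Otimes>\<^sub>M Y)" and "sets \<pi>2 = sets (X \<Otimes>\<^sub>M Y)"
  shows mix_measure_0: "mix_measure X Y 0 \<pi>1 \<pi>2 = \<pi>2"
    and mix_measure_1: "mix_measure X Y 1 \<pi>1 \<pi>2 = \<pi>1"
  using assms by (auto intro!: measure_eqI simp: emeasure_mix_measure sets_mix_measure)

definition kernel_normalized :: "'b measure \<Rightarrow> ('b \<Rightarrow> 'a measure) \<Rightarrow> ('a \<times> 'b \<Rightarrow> real) \<Rightarrow> bool" where
  "kernel_normalized Y \<nu> c \<longleftrightarrow> (\<forall>y\<in>space Y. (\<integral>\<^sup>+x. ennreal (exp (c (x, y))) \<partial>\<nu> y) = 1)"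

definition admissible ::
  "'a measure \<Rightarrow> 'b measure \<Rightarrow> ('b \<Rightarrow> 'a measure) \<Rightarrow> ('a \<times> 'b) measure \<Rightarrow> ('a \<times> 'b \<Rightarrow> real) set" where
  "admissible X Y \<nu> \<pi> =
    {c. c \<in> borel_measurable (X \<Otimes>\<^sub>M Y) \<and> integral_well_defined \<pi> c \<and> kernel_normalized Y \<nu> c}"

definition Sup_admissible ::
  "'a measure \<Rightarrow> 'b measure \<Rightarrow> ('b \<Rightarrow> 'a measure) \<Rightarrow> ('a \<times> 'b) measure \<Rightarrow> ereal" where
  "Sup_admissible X Y \<nu> \<pi> = (SUP c \<in> admissible X Y \<nu> \<pi>. ext_integral \<pi> c)"

lemma H_kernel_eq_uminus_Sup_admissible: "H_kernel X Y \<nu> \<pi> = - Sup_admissible X Y \<nu> \<pi>"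
  unfolding H_kernel_def Sup_admissible_def admissible_def kernel_normalized_def by simp

lemma ext_integral_eq_integral:
  assumes "integrable M f"
  shows "ext_integral M f = ereal (integral\<^sup>L M f)"
proof -
  have enn2ereal_finite: "enn2ereal P = ereal (enn2real P)" if "P \<noteq> \<top>" for P :: ennreal
    using that by (cases P rule: ennreal_cases) auto
  have "int_pos M f \<noteq> \<top>" "int_neg M f \<noteq> \<top>"
    using assms unfolding real_integrable_def int_pos_def int_neg_def by auto
  then show ?thesis
    unfolding ext_integral_def real_lebesgue_integral_def[OF assms]
    by (simp add: enn2ereal_finite int_pos_def int_neg_def)
qed

lemma integrable_bounded_prob_on:
  fixes c :: "'a \<times> 'b \<Rightarrow> real"
  assumes p: "prob_on \<pi> X Y" and c: "c \<in> borel_measurable (X \<Otimes>\<^sub>M Y)"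
    and B: "\<forall>z\<in>space (X \<Otimes>\<^sub>M Y). \<bar>c z\<bar> \<le> B"
  shows "integrable \<pi> c"
proof -
  interpret prob_space \<pi> using p by (simp add: prob_on_def)
  have sets: "sets \<pi> = sets (X \<Otimes>\<^sub>M Y)" using p by (simp add: prob_on_def)
  then have "space \<pi> = space (X \<Otimes>\<^sub>M Y)" by (rule sets_eq_imp_space_eq)
  with sets c B show ?thesis
    by (intro integrable_const_bound[where B=B]) (auto cong: measurable_cong_sets)
qed

lemma bounded_admissible:
  assumes p: "prob_on \<pi> X Y" and c: "c \<in> borel_measurable (X \<Otimes>\<^sub>M Y)"
    and B: "\<forall>z\<in>space (X \<Otimes>\<^sub>M Y). \<bar>c z\<bar> \<le> B" and n: "kernel_normalized Y \<nu> c"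
  shows "c \<in> admissible X Y \<nu> \<pi>"
proof -
  have "integrable \<pi> c" using integrable_bounded_prob_on[OF p c B] .
  then show ?thesis
    using c n unfolding admissible_def integral_well_defined_def real_integrable_def int_pos_def
    by auto
qed

lemma prob_kernel_prob_space: "prob_kernel Y X \<nu> \<Longrightarrow> y \<in> space Y \<Longrightarrow> prob_space (\<nu> y)"
  by (simp add: prob_kernel_def)

lemma measurable_prob_kernel: "prob_kernel Y X \<nu> \<Longrightarrow> \<nu> \<in> Y \<rightarrow>\<^sub>M subprob_algebra X"
  unfolding prob_kernel_def
  by (intro measurable_subprob_algebra) (auto intro: prob_space_imp_subprob_space)

lemma measurable_kernel_section:
  assumes k: "prob_kernel Y X \<nu>" and y: "y \<in> space Y" and g: "g \<in> borel_measurable (X \<Otimes>\<^sub>M Y)"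
  shows "(\<lambda>x. g (x, y)) \<in> borel_measurable (\<nu> y)"
proof -
  have "sets (\<nu> y) = sets X" using k y by (simp add: prob_kernel_def)
  then show ?thesis
    using measurable_compose[OF measurable_Pair2'[OF y] g] by (simp cong: measurable_cong_sets)
qed

lemma Sup_admissible_nonneg:
  assumes k: "prob_kernel Y X \<nu>" and p: "prob_on \<pi> X Y"
  shows "0 \<le> Sup_admissible X Y \<nu> \<pi>"
proof -
  have "kernel_normalized Y \<nu> (\<lambda>_. 0)"
    using k by (simp add: kernel_normalized_def prob_kernel_prob_space prob_space.emeasure_space_1)
  then have "(\<lambda>_. 0) \<in> admissible X Y \<nu> \<pi>"
    using p by (intro bounded_admissible[where B=0]) auto
  moreover have "ext_integral \<pi> (\<lambda>_. 0) = 0"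
    by (simp add: ext_integral_eq_integral)
  ultimately show ?thesis unfolding Sup_admissible_def by (metis SUP_upper)
qed

lemma ereal_convex_combination_diff:
  fixes a1 a2 b1 b2 :: ereal and t :: real
  assumes t: "0 < t" "t < 1" and nonneg: "0 \<le> a1" "0 \<le> a2" "0 \<le> b1" "0 \<le> b2"
    and finite: "(a1 \<noteq> \<infinity> \<and> a2 \<noteq> \<infinity>) \<or> (b1 \<noteq> \<infinity> \<and> b2 \<noteq> \<infinity>)"
  shows "(ereal t * a1 + ereal (1 - t) * a2) - (ereal t * b1 + ereal (1 - t) * b2)
    = ereal t * (a1 - b1) + ereal (1 - t) * (a2 - b2)"
  using finite
proof
  assume "a1 \<noteq> \<infinity> \<and> a2 \<noteq> \<infinity>"
  with nonneg obtain r1 r2 where "a1 = ereal r1" "a2 = ereal r2" by (cases a1; cases a2) auto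
  with t nonneg show ?thesis by (cases b1; cases b2) (auto simp: algebra_simps)
next
  assume "b1 \<noteq> \<infinity> \<and> b2 \<noteq> \<infinity>"
  with nonneg obtain r1 r2 where "b1 = ereal r1" "b2 = ereal r2" by (cases b1; cases b2) auto
  with t nonneg show ?thesis by (cases a1; cases a2) (auto simp: algebra_simps)
qed

lemma enn2ereal_convex_combination:
  "0 \<le> t \<Longrightarrow> t \<le> 1 \<Longrightarrow>
   enn2ereal (ennreal t * a + ennreal (1 - t) * b) = ereal t * enn2ereal a + ereal (1 - t) * enn2ereal b"
  by (simp add: plus_ennreal.rep_eq times_ennreal.rep_eq)

lemma ext_integral_mix_measure:
  assumes s1: "sets \<pi>1 = sets (X \<Otimes>\<^sub>M Y)" and s2: "sets \<pi>2 = sets (X \<Otimes>\<^sub>M Y)"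
    and t: "0 < t" "t < 1" and c: "c \<in> borel_measurable (X \<Otimes>\<^sub>M Y)"
    and wd: "integral_well_defined (mix_measure X Y t \<pi>1 \<pi>2) c"
  shows "integral_well_defined \<pi>1 c" and "integral_well_defined \<pi>2 c"
    and "ext_integral (mix_measure X Y t \<pi>1 \<pi>2) c
      = ereal t * ext_integral \<pi>1 c + ereal (1 - t) * ext_integral \<pi>2 c"
proof -
  have pos: "int_pos (mix_measure X Y t \<pi>1 \<pi>2) c
      = ennreal t * int_pos \<pi>1 c + ennreal (1 - t) * int_pos \<pi>2 c"
    and neg: "int_neg (mix_measure X Y t \<pi>1 \<pi>2) c
      = ennreal t * int_neg \<pi>1 c + ennreal (1 - t) * int_neg \<pi>2 c"
    unfolding int_pos_def int_neg_def using c by (simp_all add: nn_integral_mix_measure[OF s1 s2])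
  have finite: "(int_pos \<pi>1 c \<noteq> \<top> \<and> int_pos \<pi>2 c \<noteq> \<top>) \<or> (int_neg \<pi>1 c \<noteq> \<top> \<and> int_neg \<pi>2 c \<noteq> \<top>)"
    using wd t unfolding integral_well_defined_def pos neg by (auto simp: ennreal_mult_eq_top_iff)
  then show "integral_well_defined \<pi>1 c" "integral_well_defined \<pi>2 c"
    using c s1 s2 by (auto simp: integral_well_defined_def cong: measurable_cong_sets)
  show "ext_integral (mix_measure X Y t \<pi>1 \<pi>2) c
      = ereal t * ext_integral \<pi>1 c + ereal (1 - t) * ext_integral \<pi>2 c"
    unfolding ext_integral_def pos neg enn2ereal_convex_combination[OF less_imp_le less_imp_le, OF t]
    using finite by (intro ereal_convex_combination_diff[OF t]) auto
qed

lemma Sup_admissible_mix_le: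
  assumes p1: "prob_on \<pi>1 X Y" and p2: "prob_on \<pi>2 X Y" and t: "0 < t" "t < 1"
  shows "Sup_admissible X Y \<nu> (mix_measure X Y t \<pi>1 \<pi>2)
    \<le> ereal t * Sup_admissible X Y \<nu> \<pi>1 + ereal (1 - t) * Sup_admissible X Y \<nu> \<pi>2"
  unfolding Sup_admissible_def
proof (rule SUP_least)
  fix c assume c: "c \<in> admissible X Y \<nu> (mix_measure X Y t \<pi>1 \<pi>2)"
  have s: "sets \<pi>1 = sets (X \<Otimes>\<^sub>M Y)" "sets \<pi>2 = sets (X \<Otimes>\<^sub>M Y)"
    using p1 p2 by (simp_all add: prob_on_def)
  have c_meas: "c \<in> borel_measurable (X \<Otimes>\<^sub>M Y)"
    and c_wd: "integral_well_defined (mix_measure X Y t \<pi>1 \<pi>2) c"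
    using c by (simp_all add: admissible_def)
  note mix = ext_integral_mix_measure[OF s t c_meas c_wd]
  have "c \<in> admissible X Y \<nu> \<pi>1" "c \<in> admissible X Y \<nu> \<pi>2"
    using c mix(1,2) by (auto simp: admissible_def)
  then show "ext_integral (mix_measure X Y t \<pi>1 \<pi>2) c
      \<le> ereal t * (SUP c \<in> admissible X Y \<nu> \<pi>1. ext_integral \<pi>1 c)
        + ereal (1 - t) * (SUP c \<in> admissible X Y \<nu> \<pi>2. ext_integral \<pi>2 c)"
    using t unfolding mix(3) by (intro add_mono ereal_mult_left_mono SUP_upper) auto
qed

lemma H_kernel_concave:
  assumes k: "prob_kernel Y X \<nu>" and p1: "prob_on \<pi>1 X Y" and p2: "prob_on \<pi>2 X Y"
    and t: "0 \<le> t" "t \<le> 1"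
  shows "ereal t * H_kernel X Y \<nu> \<pi>1 + ereal (1 - t) * H_kernel X Y \<nu> \<pi>2
    \<le> H_kernel X Y \<nu> (mix_measure X Y t \<pi>1 \<pi>2)"
proof -
  have s: "sets \<pi>1 = sets (X \<Otimes>\<^sub>M Y)" "sets \<pi>2 = sets (X \<Otimes>\<^sub>M Y)"
    using p1 p2 by (simp_all add: prob_on_def)
  \<comment> \<open>At \<open>t = 0\<close> a constraint admissible for the mixture need not have a well-defined
    \<open>\<pi>1\<close>-integral (\<open>0 * \<infinity> = 0\<close> in \<open>ennreal\<close>), so the endpoints are treated separately.\<close>
  consider "t = 0" | "t = 1" | "0 < t" "t < 1" using t by linarith
  then show ?thesis
  proof cases
    case 1
    then show ?thesis
      by (simp add: mix_measure_0[OF s] zero_ereal_def[symmetric] one_ereal_def[symmetric])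
  next
    case 2
    then show ?thesis
      by (simp add: mix_measure_1[OF s] zero_ereal_def[symmetric] one_ereal_def[symmetric])
  next
    case 3
    have "0 \<le> Sup_admissible X Y \<nu> \<pi>1" "0 \<le> Sup_admissible X Y \<nu> \<pi>2"
      using Sup_admissible_nonneg[OF k] p1 p2 by auto
    then have "ereal t * H_kernel X Y \<nu> \<pi>1 + ereal (1 - t) * H_kernel X Y \<nu> \<pi>2
        = - (ereal t * Sup_admissible X Y \<nu> \<pi>1 + ereal (1 - t) * Sup_admissible X Y \<nu> \<pi>2)"
      unfolding H_kernel_eq_uminus_Sup_admissible using t
      by (cases "Sup_admissible X Y \<nu> \<pi>1"; cases "Sup_admissible X Y \<nu> \<pi>2") auto
    also have "\<dots> \<le> H_kernel X Y \<nu> (mix_measure X Y t \<pi>1 \<pi>2)"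
      unfolding H_kernel_eq_uminus_Sup_admissible using Sup_admissible_mix_le[OF p1 p2 3] by simp
    finally show ?thesis .
  qed
qed

lemma int_neg_truncation: "int_neg M (\<lambda>z. min (c z) (real L)) = int_neg M c"
  unfolding int_neg_def by (rule nn_integral_cong) (auto simp: min_def ennreal_neg)

lemma integrable_truncation:
  fixes c :: "'a \<Rightarrow> real"
  assumes "finite_measure M" and c: "c \<in> borel_measurable M" and neg: "int_neg M c \<noteq> \<top>"
  shows "integrable M (\<lambda>z. min (c z) (real L))"
proof -
  interpret finite_measure M by fact
  have "int_pos M (\<lambda>z. min (c z) (real L)) \<le> (\<integral>\<^sup>+z. ennreal (real L) \<partial>M)"
    unfolding int_pos_def by (intro nn_integral_mono) auto
  also have "\<dots> < \<top>"
    by (simp add: ennreal_mult_eq_top_iff less_top[symmetric])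
  finally show ?thesis
    using c neg int_neg_truncation[of M c L]
    unfolding real_integrable_def int_pos_def int_neg_def by auto
qed

lemma tendsto_ext_integral_truncation:
  fixes c :: "'a \<Rightarrow> real"
  assumes M: "finite_measure M" and c: "c \<in> borel_measurable M" and neg: "int_neg M c \<noteq> \<top>"
  shows "(\<lambda>L::nat. ereal (\<integral>z. min (c z) (real L) \<partial>M)) \<longlonglongrightarrow> ext_integral M c"
proof -
  have "(\<lambda>L::nat. int_pos M (\<lambda>z. min (c z) (real L))) \<longlonglongrightarrow> int_pos M c"
    unfolding int_pos_def
  proof (rule nn_integral_LIMSEQ)
    show "incseq (\<lambda>L z. ennreal (min (c z) (real L)))"
      by (auto simp: incseq_def le_fun_def intro!: ennreal_leI)
    show "(\<lambda>z. ennreal (min (c z) (real L))) \<in> borel_measurable M" for L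
      using c by measurable
    show "(\<lambda>L. ennreal (min (c z) (real L))) \<longlonglongrightarrow> ennreal (c z)" for z
    proof (rule tendsto_eventually)
      show "\<forall>\<^sub>F L in sequentially. ennreal (min (c z) (real L)) = ennreal (c z)"
        using eventually_ge_at_top[of "nat \<lceil>c z\<rceil>"]
        by eventually_elim (use real_nat_ceiling_ge in \<open>force simp: min_def\<close>)
    qed
  qed
  then have "(\<lambda>L::nat. ext_integral M (\<lambda>z. min (c z) (real L))) \<longlonglongrightarrow> ext_integral M c"
    unfolding ext_integral_def int_neg_truncation using neg by (intro tendsto_diff_ereal_general) auto
  then show ?thesis by (simp add: ext_integral_eq_integral[OF integrable_truncation[OF M c neg]])
qed

lemma nn_integral_exp_bounded:
  fixes h :: "'a \<Rightarrow> real"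
  assumes "prob_space M" and h: "h \<in> borel_measurable M" and B: "\<forall>x\<in>space M. \<bar>h x\<bar> \<le> B"
  obtains Z where "(\<integral>\<^sup>+x. ennreal (exp (h x)) \<partial>M) = ennreal Z" and "exp (- B) \<le> Z" and "Z \<le> exp B"
proof -
  interpret prob_space M by fact
  have "ennreal (exp (- B)) = (\<integral>\<^sup>+x. ennreal (exp (- B)) \<partial>M)"
    by (simp add: emeasure_space_1)
  also have "\<dots> \<le> (\<integral>\<^sup>+x. ennreal (exp (h x)) \<partial>M)"
    using B by (intro nn_integral_mono_AE AE_I2) (auto simp: abs_le_iff)
  finally have "ennreal (exp (- B)) \<le> (\<integral>\<^sup>+x. ennreal (exp (h x)) \<partial>M)" .
  moreover have "(\<integral>\<^sup>+x. ennreal (exp (h x)) \<partial>M) \<le> (\<integral>\<^sup>+x. ennreal (exp B) \<partial>M)"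
    using B by (intro nn_integral_mono_AE AE_I2) (auto simp: abs_le_iff)
  ultimately show ?thesis
    by (cases "\<integral>\<^sup>+x. ennreal (exp (h x)) \<partial>M" rule: ennreal_cases)
       (auto intro!: that simp: ennreal_le_iff emeasure_space_1 top_unique)
qed

lemma nn_integral_exp_truncation_le:
  fixes f :: "'a \<Rightarrow> real"
  assumes "prob_space M" and f: "f \<in> borel_measurable M"
    and normalized: "(\<integral>\<^sup>+x. ennreal (exp (f x)) \<partial>M) = 1" and a: "0 < a"
  shows "(\<integral>\<^sup>+x. ennreal (exp (max (min (f x) L) (ln a))) \<partial>M) \<le> ennreal (1 + a)"
proof -
  interpret prob_space M by fact
  have "(\<integral>\<^sup>+x. ennreal (exp (max (min (f x) L) (ln a))) \<partial>M) \<le> (\<integral>\<^sup>+x. ennreal (exp (f x)) + ennreal a \<partial>M)"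
  proof (intro nn_integral_mono)
    fix x
    have "exp (max (min (f x) L) (ln a)) \<le> exp (f x) + a"
    proof (cases "min (f x) L \<le> ln a")
      case True
      then have "exp (max (min (f x) L) (ln a)) = a" using a by (simp add: max_absorb2)
      then show ?thesis using exp_gt_zero[of "f x"] by linarith
    next
      case False
      then have "exp (max (min (f x) L) (ln a)) = exp (min (f x) L)" by (simp add: max_absorb1)
      moreover have "exp (min (f x) L) \<le> exp (f x)" by simp
      ultimately show ?thesis using a by linarith
    qed
    then show "ennreal (exp (max (min (f x) L) (ln a))) \<le> ennreal (exp (f x)) + ennreal a"
      using a by (metis ennreal_leI ennreal_plus exp_ge_zero less_imp_le)
  qed
  also have "\<dots> = ennreal (1 + a)"
    using f a by (simp add: nn_integral_add normalized emeasure_space_1 ennreal_plus)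
  finally show ?thesis .
qed

definition kernel_normalize :: "('b \<Rightarrow> 'a measure) \<Rightarrow> ('a \<times> 'b \<Rightarrow> real) \<Rightarrow> 'a \<times> 'b \<Rightarrow> real" where
  "kernel_normalize \<nu> g z = g z - ln (enn2real (\<integral>\<^sup>+x. ennreal (exp (g (x, snd z))) \<partial>\<nu> (snd z)))"

lemma measurable_kernel_normalize:
  assumes k: "prob_kernel Y X \<nu>" and g[measurable]: "g \<in> borel_measurable (X \<Otimes>\<^sub>M Y)"
  shows "kernel_normalize \<nu> g \<in> borel_measurable (X \<Otimes>\<^sub>M Y)"
proof -
  have "(\<lambda>y. \<integral>\<^sup>+x. ennreal (exp (g (x, y))) \<partial>\<nu> y) \<in> borel_measurable Y"
    by (rule nn_integral_measurable_subprob_algebra2[OF _ measurable_prob_kernel[OF k]]) measurable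
  then show ?thesis
    unfolding kernel_normalize_def[abs_def] by measurable
qed

lemma kernel_normalize_partition:
  assumes k: "prob_kernel Y X \<nu>" and g: "g \<in> borel_measurable (X \<Otimes>\<^sub>M Y)"
    and B: "\<forall>z\<in>space (X \<Otimes>\<^sub>M Y). \<bar>g z\<bar> \<le> B" and y: "y \<in> space Y"
  obtains Z where "(\<integral>\<^sup>+x. ennreal (exp (g (x, y))) \<partial>\<nu> y) = ennreal Z" and "exp (- B) \<le> Z" and "Z \<le> exp B"
    and "\<And>x. kernel_normalize \<nu> g (x, y) = g (x, y) - ln Z"
proof -
  have "space (\<nu> y) = space X"
    using k y by (intro sets_eq_imp_space_eq) (simp add: prob_kernel_def)
  then have "\<forall>x\<in>space (\<nu> y). \<bar>g (x, y)\<bar> \<le> B"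
    using B y by (simp add: space_pair_measure)
  with prob_kernel_prob_space[OF k y] measurable_kernel_section[OF k y g]
  obtain Z where "(\<integral>\<^sup>+x. ennreal (exp (g (x, y))) \<partial>\<nu> y) = ennreal Z" "exp (- B) \<le> Z" "Z \<le> exp B"
    by (rule nn_integral_exp_bounded)
  moreover have "0 \<le> Z" using \<open>exp (- B) \<le> Z\<close> exp_gt_zero[of "- B"] by linarith
  ultimately show ?thesis by (intro that) (simp_all add: kernel_normalize_def)
qed

lemma kernel_normalized_kernel_normalize:
  assumes k: "prob_kernel Y X \<nu>" and g: "g \<in> borel_measurable (X \<Otimes>\<^sub>M Y)"
    and B: "\<forall>z\<in>space (X \<Otimes>\<^sub>M Y). \<bar>g z\<bar> \<le> B"
  shows "kernel_normalized Y \<nu> (kernel_normalize \<nu> g)"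
  unfolding kernel_normalized_def
proof
  fix y assume y: "y \<in> space Y"
  obtain Z where Z: "(\<integral>\<^sup>+x. ennreal (exp (g (x, y))) \<partial>\<nu> y) = ennreal Z" "exp (- B) \<le> Z"
    and eq: "\<And>x. kernel_normalize \<nu> g (x, y) = g (x, y) - ln Z"
    using kernel_normalize_partition[OF k g B y] by blast
  have Z_pos: "0 < Z" using Z(2) exp_gt_zero[of "- B"] by linarith
  have "(\<integral>\<^sup>+x. ennreal (exp (kernel_normalize \<nu> g (x, y))) \<partial>\<nu> y)
      = (\<integral>\<^sup>+x. ennreal (exp (g (x, y))) * ennreal (1 / Z) \<partial>\<nu> y)"
    using Z_pos by (intro nn_integral_cong) (simp add: eq exp_diff ennreal_mult[symmetric])
  also have "\<dots> = ennreal Z * ennreal (1 / Z)"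
    using measurable_kernel_section[OF k y g] by (simp add: nn_integral_multc Z(1))
  also have "\<dots> = 1" using Z_pos by (simp add: ennreal_mult[symmetric])
  finally show "(\<integral>\<^sup>+x. ennreal (exp (kernel_normalize \<nu> g (x, y))) \<partial>\<nu> y) = 1" .
qed

lemma kernel_normalize_bounded:
  assumes k: "prob_kernel Y X \<nu>" and g: "g \<in> borel_measurable (X \<Otimes>\<^sub>M Y)"
    and B: "\<forall>z\<in>space (X \<Otimes>\<^sub>M Y). \<bar>g z\<bar> \<le> B"
  shows "\<forall>z\<in>space (X \<Otimes>\<^sub>M Y). \<bar>kernel_normalize \<nu> g z\<bar> \<le> 2 * B"
proof
  fix z assume z: "z \<in> space (X \<Otimes>\<^sub>M Y)"
  then obtain x y where xy: "z = (x, y)" "y \<in> space Y" by (auto simp: space_pair_measure)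
  obtain Z where Z: "exp (- B) \<le> Z" "Z \<le> exp B"
    and eq: "kernel_normalize \<nu> g (x, y) = g (x, y) - ln Z"
    using kernel_normalize_partition[OF k g B xy(2)] by blast
  have "0 < exp (- B)" by simp
  then have "- B \<le> ln Z" "ln Z \<le> B"
    using Z by (metis ln_exp ln_le_cancel_iff order_less_le_trans exp_gt_zero)+
  then show "\<bar>kernel_normalize \<nu> g z\<bar> \<le> 2 * B"
    using B z unfolding xy eq by fastforce
qed

lemma int_neg_neq_top:
  assumes "integral_well_defined M c" and "ext_integral M c \<noteq> - \<infinity>"
  shows "int_neg M c \<noteq> \<top>"
  using assms unfolding integral_well_defined_def ext_integral_def
  by (cases "int_pos M c" rule: ennreal_cases) auto

text \<open>
  Truncating \<open>c\<close> to the range \<open>[ln a, L]\<close> raises \<open>\<integral> e\<^sup>c d\<nu>\<^sup>y = 1\<close> to at most \<open>1 + a\<close>,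
  so renormalising lowers the truncation by at most \<open>ln (1 + a) \<le> a\<close>.
\<close>

lemma kernel_normalize_truncation_ge:
  assumes k: "prob_kernel Y X \<nu>" and c[measurable]: "c \<in> borel_measurable (X \<Otimes>\<^sub>M Y)"
    and normalized: "kernel_normalized Y \<nu> c" and a: "0 < a" and z: "z \<in> space (X \<Otimes>\<^sub>M Y)"
  shows "min (c z) L - a \<le> kernel_normalize \<nu> (\<lambda>z. max (min (c z) L) (ln a)) z"
proof -
  define g where "g z = max (min (c z) L) (ln a)" for z
  have g_meas: "g \<in> borel_measurable (X \<Otimes>\<^sub>M Y)" unfolding g_def[abs_def] by measurable
  have g_bounded: "\<forall>z\<in>space (X \<Otimes>\<^sub>M Y). \<bar>g z\<bar> \<le> \<bar>ln a\<bar> + \<bar>L\<bar>" by (auto simp: g_def)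
  obtain x y where xy: "z = (x, y)" "y \<in> space Y" using z by (auto simp: space_pair_measure)
  obtain Z where Z: "(\<integral>\<^sup>+x. ennreal (exp (g (x, y))) \<partial>\<nu> y) = ennreal Z" "exp (- (\<bar>ln a\<bar> + \<bar>L\<bar>)) \<le> Z"
    and eq: "kernel_normalize \<nu> g (x, y) = g (x, y) - ln Z"
    using kernel_normalize_partition[OF k g_meas g_bounded xy(2)] by blast
  have "ennreal Z \<le> ennreal (1 + a)"
    unfolding Z(1)[symmetric] g_def
    using normalized xy(2) a prob_kernel_prob_space[OF k xy(2)] measurable_kernel_section[OF k xy(2) c]
    by (intro nn_integral_exp_truncation_le) (auto simp: kernel_normalized_def)
  then have "Z \<le> 1 + a" using a by (subst (asm) ennreal_le_iff) auto
  moreover have "0 < Z" using Z(2) exp_gt_zero[of "- (\<bar>ln a\<bar> + \<bar>L\<bar>)"] by linarith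
  ultimately have "ln Z \<le> ln (1 + a)" using a by simp
  also have "\<dots> \<le> a" using a by (intro ln_add_one_self_le_self) simp
  finally show ?thesis unfolding xy g_def[symmetric] eq by (simp add: g_def)
qed

lemma admissible_approx_bounded:
  assumes k: "prob_kernel Y X \<nu>" and p: "prob_on \<pi> X Y" and c: "c \<in> admissible X Y \<nu> \<pi>"
    and r: "ereal r < ext_integral \<pi> c"
  obtains c' B where "c' \<in> borel_measurable (X \<Otimes>\<^sub>M Y)" and "\<forall>z\<in>space (X \<Otimes>\<^sub>M Y). \<bar>c' z\<bar> \<le> B"
    and "kernel_normalized Y \<nu> c'" and "r < integral\<^sup>L \<pi> c'"
proof -
  interpret prob_space \<pi> using p by (simp add: prob_on_def)
  have sets: "sets \<pi> = sets (X \<Otimes>\<^sub>M Y)" using p by (simp add: prob_on_def)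
  have c_meas[measurable]: "c \<in> borel_measurable (X \<Otimes>\<^sub>M Y)" and c_norm: "kernel_normalized Y \<nu> c"
    and c_wd: "integral_well_defined \<pi> c"
    using c by (simp_all add: admissible_def)
  have c_meas_\<pi>: "c \<in> borel_measurable \<pi>" using sets by (simp cong: measurable_cong_sets)
  have neg: "int_neg \<pi> c \<noteq> \<top>" using r by (intro int_neg_neq_top[OF c_wd]) auto
  obtain \<rho> where \<rho>: "r < \<rho>" "ereal \<rho> < ext_integral \<pi> c"
    using ereal_dense2[OF r] by auto
  define a where "a = \<rho> - r"
  have a: "0 < a" using \<rho> by (simp add: a_def)
  have "\<forall>\<^sub>F L in sequentially. ereal (r + a) < ereal (\<integral>z. min (c z) (real L) \<partial>\<pi>)"
    using \<rho> finite_measure_axioms c_meas_\<pi> neg unfolding a_def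
    by (intro order_tendstoD(1)[OF tendsto_ext_integral_truncation]) auto
  then obtain L :: nat where L: "r + a < (\<integral>z. min (c z) (real L) \<partial>\<pi>)"
    by (auto simp: eventually_sequentially)
  define g where "g z = max (min (c z) (real L)) (ln a)" for z
  have g_meas: "g \<in> borel_measurable (X \<Otimes>\<^sub>M Y)" unfolding g_def[abs_def] by measurable
  have g_bounded: "\<forall>z\<in>space (X \<Otimes>\<^sub>M Y). \<bar>g z\<bar> \<le> \<bar>ln a\<bar> + real L" by (auto simp: g_def)
  define c' where "c' = kernel_normalize \<nu> g"
  have c'_meas: "c' \<in> borel_measurable (X \<Otimes>\<^sub>M Y)"
    unfolding c'_def by (rule measurable_kernel_normalize[OF k g_meas])
  have c'_bounded: "\<forall>z\<in>space (X \<Otimes>\<^sub>M Y). \<bar>c' z\<bar> \<le> 2 * (\<bar>ln a\<bar> + real L)"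
    unfolding c'_def by (rule kernel_normalize_bounded[OF k g_meas g_bounded])
  have int_L: "integrable \<pi> (\<lambda>z. min (c z) (real L))"
    by (rule integrable_truncation[OF finite_measure_axioms c_meas_\<pi> neg])
  have "r + a < (\<integral>z. min (c z) (real L) \<partial>\<pi>)" by (fact L)
  also have "(\<integral>z. min (c z) (real L) \<partial>\<pi>) = (\<integral>z. min (c z) (real L) - a \<partial>\<pi>) + a"
    using int_L by (simp add: prob_space)
  also have "(\<integral>z. min (c z) (real L) - a \<partial>\<pi>) \<le> integral\<^sup>L \<pi> c'"
    using int_L integrable_bounded_prob_on[OF p c'_meas c'_bounded] a
      kernel_normalize_truncation_ge[OF k c_meas c_norm a]
    by (intro integral_mono) (auto simp: c'_def g_def[abs_def] sets_eq_imp_space_eq[OF sets])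
  finally have "r < integral\<^sup>L \<pi> c'" by simp
  moreover have "kernel_normalized Y \<nu> c'"
    unfolding c'_def by (rule kernel_normalized_kernel_normalize[OF k g_meas g_bounded])
  ultimately show ?thesis using c'_meas c'_bounded by (intro that)
qed

lemma Sup_admissible_le_liminf:
  assumes k: "prob_kernel Y X \<nu>" and ps: "\<And>n. prob_on (\<pi>s n) X Y" and p: "prob_on \<pi> X Y"
    and conv: "\<And>f :: 'a \<times> 'b \<Rightarrow> real. f \<in> borel_measurable (X \<Otimes>\<^sub>M Y) \<Longrightarrow> bounded (f ` space (X \<Otimes>\<^sub>M Y)) \<Longrightarrow>
      (\<lambda>n. \<integral>z. f z \<partial>\<pi>s n) \<longlonglongrightarrow> (\<integral>z. f z \<partial>\<pi>)"
  shows "Sup_admissible X Y \<nu> \<pi> \<le> liminf (\<lambda>n. Sup_admissible X Y \<nu> (\<pi>s n))"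
  unfolding Sup_admissible_def[of X Y \<nu> \<pi>]
proof (rule SUP_least, rule dense_le)
  fix c and x :: ereal
  assume c: "c \<in> admissible X Y \<nu> \<pi>" and x: "x < ext_integral \<pi> c"
  show "x \<le> liminf (\<lambda>n. Sup_admissible X Y \<nu> (\<pi>s n))"
  proof (cases x)
    case (real r)
    with x obtain c' B where c'_meas: "c' \<in> borel_measurable (X \<Otimes>\<^sub>M Y)"
      and c'_bounded: "\<forall>z\<in>space (X \<Otimes>\<^sub>M Y). \<bar>c' z\<bar> \<le> B"
      and c'_norm: "kernel_normalized Y \<nu> c'" and r: "r < integral\<^sup>L \<pi> c'"
      using admissible_approx_bounded[OF k p c] by blast
    have "(\<lambda>n. \<integral>z. c' z \<partial>\<pi>s n) \<longlonglongrightarrow> (\<integral>z. c' z \<partial>\<pi>)"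
      using c'_bounded by (intro conv[OF c'_meas]) (auto simp: bounded_real)
    then have lim: "liminf (\<lambda>n. ereal (\<integral>z. c' z \<partial>\<pi>s n)) = ereal (\<integral>z. c' z \<partial>\<pi>)"
      by (intro lim_imp_Liminf) auto
    have "x \<le> ereal (\<integral>z. c' z \<partial>\<pi>)" using r real by simp
    also have "\<dots> = liminf (\<lambda>n. ereal (\<integral>z. c' z \<partial>\<pi>s n))" by (rule lim[symmetric])
    also have "\<dots> \<le> liminf (\<lambda>n. Sup_admissible X Y \<nu> (\<pi>s n))"
    proof (intro Liminf_mono always_eventually allI)
      fix n
      have "c' \<in> admissible X Y \<nu> (\<pi>s n)"
        by (rule bounded_admissible[OF ps c'_meas c'_bounded c'_norm])
      then show "ereal (\<integral>z. c' z \<partial>\<pi>s n) \<le> Sup_admissible X Y \<nu> (\<pi>s n)"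
        unfolding Sup_admissible_def
        using integrable_bounded_prob_on[OF ps c'_meas c'_bounded]
        by (metis SUP_upper ext_integral_eq_integral)
    qed
    finally show ?thesis .
  qed (use x in auto)
qed

lemma H_kernel_limsup_le:
  assumes k: "prob_kernel Y X \<nu>" and ps: "\<And>n. prob_on (\<pi>s n) X Y" and p: "prob_on \<pi> X Y"
    and conv: "\<And>f :: 'a \<times> 'b \<Rightarrow> real. f \<in> borel_measurable (X \<Otimes>\<^sub>M Y) \<Longrightarrow> bounded (f ` space (X \<Otimes>\<^sub>M Y)) \<Longrightarrow>
      (\<lambda>n. \<integral>z. f z \<partial>\<pi>s n) \<longlonglongrightarrow> (\<integral>z. f z \<partial>\<pi>)"
  shows "limsup (\<lambda>n. H_kernel X Y \<nu> (\<pi>s n)) \<le> H_kernel X Y \<nu> \<pi>"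
  using Sup_admissible_le_liminf[OF k ps p conv]
  by (simp add: H_kernel_eq_uminus_Sup_admissible ereal_Limsup_uminus)

theorem mainTheorem4:
  fixes X :: "'a measure" and Y :: "'b measure" and \<nu> :: "'b \<Rightarrow> 'a measure"
  assumes kernel: "prob_kernel Y X \<nu>"
  shows "(\<forall>\<pi>1 \<pi>2 t. prob_on \<pi>1 X Y \<longrightarrow> prob_on \<pi>2 X Y \<longrightarrow> 0 \<le> t \<longrightarrow> t \<le> 1 \<longrightarrow>
            ereal t * H_kernel X Y \<nu> \<pi>1 + ereal (1 - t) * H_kernel X Y \<nu> \<pi>2
              \<le> H_kernel X Y \<nu> (mix_measure X Y t \<pi>1 \<pi>2))
       \<and> (\<forall>(\<pi>s :: nat \<Rightarrow> ('a \<times> 'b) measure) \<pi>.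
            (\<forall>n. prob_on (\<pi>s n) X Y) \<longrightarrow> prob_on \<pi> X Y \<longrightarrow>
            (\<forall>f :: 'a \<times> 'b \<Rightarrow> real. f \<in> borel_measurable (X \<Otimes>\<^sub>M Y) \<longrightarrow> bounded (f ` space (X \<Otimes>\<^sub>M Y)) \<longrightarrow>
                 (\<lambda>n. \<integral>z. f z \<partial>(\<pi>s n)) \<longlonglongrightarrow> (\<integral>z. f z \<partial>\<pi>)) \<longrightarrow>
            limsup (\<lambda>n. H_kernel X Y \<nu> (\<pi>s n)) \<le> H_kernel X Y \<nu> \<pi>)"
  using H_kernel_concave[OF kernel] H_kernel_limsup_le[OF kernel] by blast

end
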